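(* For any oriented graph $G$, $\chi^*_o(G) \geq \frac{|V(G)|}{\alpha_o(G)}$.
   Context: An oriented graph is a finite directed graph with no directed cycle of length 1 or 2. For a set $S$ of $k$ colors, a $b$-fold oriented $k$-coloring of $G$ is a map $f$ from $V(G)$ to the $b$-element subsets of $S$ such that (i) $f(x)\cap f(y)=\emptyset$ for every arc $xy$, and (ii) for all arcs $xy, zw$, $f(x)\cap f(w)\neq\emptyset$ implies $f(y)\cap f(z)=\emptyset$. $\chi^b_o(G)$ is the minimum such $k$, and $\chi^*_o(G)=\lim_{b\to\infty}\chi^b_o(G)/b=\inf_{b\ge1}\chi^b_o(G)/b$. An oriented coloring is a $1$-fold oriented coloring (viewed as a map to colors). A set $I\subseteq V(G)$ is an oriented independent set if for every two distinct $x,y\in I$ there is an oriented coloring $f$ of $G$ with $f(x)=f(y)$. The oriented independence number $\alpha_o(G)$ is the maximum size of an oriented independent set. *)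

theory Defs
  imports Complex_Main
begin

definition oriented_graph :: "'a set \<Rightarrow> ('a \<times> 'a) set \<Rightarrow> bool" where
  "oriented_graph V A \<longleftrightarrow> finite V \<and> A \<subseteq> V \<times> V \<and>
     (\<forall>x. (x, x) \<notin> A) \<and> (\<forall>x y. (x, y) \<in> A \<longrightarrow> (y, x) \<notin> A)"

definition bfold_oriented_coloring ::
  "'a set \<Rightarrow> ('a \<times> 'a) set \<Rightarrow> nat \<Rightarrow> nat \<Rightarrow> ('a \<Rightarrow> nat set) \<Rightarrow> bool" where
  "bfold_oriented_coloring V A b k f \<longleftrightarrow>
     (\<forall>x\<in>V. f x \<subseteq> {0..<k} \<and> card (f x) = b) \<and>
     (\<forall>x y. (x, y) \<in> A \<longrightarrow> f x \<inter> f y = {}) \<and>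
     (\<forall>x y z w. (x, y) \<in> A \<longrightarrow> (z, w) \<in> A \<longrightarrow> f x \<inter> f w \<noteq> {} \<longrightarrow> f y \<inter> f z = {})"

definition chi_o_b :: "nat \<Rightarrow> 'a set \<Rightarrow> ('a \<times> 'a) set \<Rightarrow> nat" where
  "chi_o_b b V A = (LEAST k. \<exists>f. bfold_oriented_coloring V A b k f)"

definition chi_o_frac :: "'a set \<Rightarrow> ('a \<times> 'a) set \<Rightarrow> real" where
  "chi_o_frac V A = (INF b\<in>{1..}. real (chi_o_b b V A) / real b)"

definition oriented_coloring :: "'a set \<Rightarrow> ('a \<times> 'a) set \<Rightarrow> ('a \<Rightarrow> nat) \<Rightarrow> bool" where
  "oriented_coloring V A f \<longleftrightarrow>
     (\<forall>x y. (x, y) \<in> A \<longrightarrow> f x \<noteq> f y) \<and>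
     (\<forall>x y z w. (x, y) \<in> A \<longrightarrow> (z, w) \<in> A \<longrightarrow> f x = f w \<longrightarrow> f y \<noteq> f z)"

definition oriented_independent :: "'a set \<Rightarrow> ('a \<times> 'a) set \<Rightarrow> 'a set \<Rightarrow> bool" where
  "oriented_independent V A I \<longleftrightarrow> I \<subseteq> V \<and>
     (\<forall>x\<in>I. \<forall>y\<in>I. x \<noteq> y \<longrightarrow> (\<exists>f. oriented_coloring V A f \<and> f x = f y))"

definition alpha_o :: "'a set \<Rightarrow> ('a \<times> 'a) set \<Rightarrow> nat" where
  "alpha_o V A = Max {card I | I. oriented_independent V A I}"

end

theory Submission
  imports Defs
begin

text \<open>Each colour class \<open>{v. c \<in> f v}\<close> of a \<open>b\<close>-fold oriented \<open>k\<close>-colouring \<open>f\<close> is an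
  oriented independent set: choosing \<open>c\<close> on the class and any colour of \<open>f v\<close> elsewhere
  yields an ordinary oriented colouring. Counting the pairs \<open>(v, c)\<close> with \<open>c \<in> f v\<close>
  therefore gives \<open>b |V| \<le> k \<alpha>\<^sub>o\<close>, i.e. \<open>\<chi>\<^sup>b\<^sub>o / b \<ge> |V| / \<alpha>\<^sub>o\<close> for every \<open>b\<close>.\<close>

lemma bfold_oriented_coloringD:
  assumes "bfold_oriented_coloring V A b k f"
  shows bfold_oriented_coloring_subset: "x \<in> V \<Longrightarrow> f x \<subseteq> {0..<k}"
    and bfold_oriented_coloring_card: "x \<in> V \<Longrightarrow> card (f x) = b"
    and bfold_oriented_coloring_arc: "(x, y) \<in> A \<Longrightarrow> f x \<inter> f y = {}"
    and bfold_oriented_coloring_twist: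
      "(x, y) \<in> A \<Longrightarrow> (z, w) \<in> A \<Longrightarrow> f x \<inter> f w \<noteq> {} \<Longrightarrow> f y \<inter> f z = {}"
  using assms unfolding bfold_oriented_coloring_def by blast+

lemma oriented_coloring_choice:
  assumes AV: "A \<subseteq> V \<times> V" and f: "bfold_oriented_coloring V A b k f"
    and g: "\<And>v. v \<in> V \<Longrightarrow> g v \<in> f v"
  shows "oriented_coloring V A g"
  unfolding oriented_coloring_def
proof (intro conjI allI impI)
  fix x y assume xy: "(x, y) \<in> A"
  then have "x \<in> V" "y \<in> V" using AV by auto
  then show "g x \<noteq> g y" using g bfold_oriented_coloring_arc[OF f xy] by (metis disjoint_iff)
next
  fix x y z w assume xy: "(x, y) \<in> A" and zw: "(z, w) \<in> A" and eq: "g x = g w"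
  have V: "x \<in> V" "y \<in> V" "z \<in> V" "w \<in> V" using xy zw AV by auto
  then have "f x \<inter> f w \<noteq> {}" using g eq by (metis IntI empty_iff)
  then have "f y \<inter> f z = {}" using bfold_oriented_coloring_twist[OF f xy zw] by blast
  then show "g y \<noteq> g z" using g V by (metis disjoint_iff)
qed

lemma oriented_independent_colour_class:
  assumes AV: "A \<subseteq> V \<times> V" and f: "bfold_oriented_coloring V A b k f" and b: "b > 0"
  shows "oriented_independent V A {v \<in> V. c \<in> f v}"
  unfolding oriented_independent_def
proof (intro conjI ballI impI)
  fix x y assume x: "x \<in> {v \<in> V. c \<in> f v}" and y: "y \<in> {v \<in> V. c \<in> f v}"
  define g where "g v = (if c \<in> f v then c else Min (f v))" for v
  have "g v \<in> f v" if "v \<in> V" for v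
  proof -
    have "finite (f v)" "f v \<noteq> {}"
      using bfold_oriented_coloring_card[OF f that] b by (auto intro: card_ge_0_finite)
    then show ?thesis unfolding g_def by simp
  qed
  then have "oriented_coloring V A g" using oriented_coloring_choice[OF AV f] by blast
  moreover have "g x = g y" using x y unfolding g_def by simp
  ultimately show "\<exists>g. oriented_coloring V A g \<and> g x = g y" by blast
qed auto

lemma card_le_alpha_o:
  assumes "finite V" and "oriented_independent V A I"
  shows "card I \<le> alpha_o V A"
proof -
  have "{card I | I. oriented_independent V A I} \<subseteq> {0..card V}"
    using assms(1) by (auto simp: oriented_independent_def intro: card_mono)
  then have "finite {card I | I. oriented_independent V A I}" by (rule finite_subset) simp
  then show ?thesis unfolding alpha_o_def using assms(2) by (auto intro: Max_ge)
qed

lemma card_mult_le_colours_mult_alpha_o: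
  assumes fin: "finite V" and AV: "A \<subseteq> V \<times> V"
    and f: "bfold_oriented_coloring V A b k f" and b: "b > 0"
  shows "b * card V \<le> k * alpha_o V A"
proof -
  have fin_f: "\<forall>v\<in>V. finite (f v)"
    using bfold_oriented_coloring_subset[OF f] finite_subset by blast
  have "b * card V = (\<Sum>v\<in>V. card (f v))" using bfold_oriented_coloring_card[OF f] by simp
  also have "\<dots> = card (Sigma V f)" using card_SigmaI[OF fin fin_f] by simp
  also have "Sigma V f = (\<lambda>(c, v). (v, c)) ` Sigma {0..<k} (\<lambda>c. {v \<in> V. c \<in> f v})"
    using bfold_oriented_coloring_subset[OF f] by force
  also have "card \<dots> = card (Sigma {0..<k} (\<lambda>c. {v \<in> V. c \<in> f v}))"
    by (rule card_image) (auto simp: inj_on_def)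
  also have "\<dots> = (\<Sum>c<k. card {v \<in> V. c \<in> f v})"
    using fin by (simp add: card_SigmaI atLeast0LessThan)
  also have "\<dots> \<le> (\<Sum>c<k. alpha_o V A)"
    by (intro sum_mono card_le_alpha_o[OF fin] oriented_independent_colour_class[OF AV f b])
  finally show ?thesis by simp
qed

lemma blocks_disjoint:
  fixes b m n :: nat
  assumes "m \<noteq> n"
  shows "{b * m..<b * m + b} \<inter> {b * n..<b * n + b} = {}"
proof -
  have "b * m + b \<le> b * n" if "m < n" for m n :: nat
    using mult_le_mono2[of "Suc m" n b] that by simp
  then show ?thesis using assms by (cases "m < n") (auto simp: not_less_iff_gr_or_eq)
qed

text \<open>Distinct vertices get disjoint blocks of \<open>b\<close> colours; condition (ii) then only
  fails for arcs \<open>xy\<close>, \<open>yx\<close>, which an oriented graph does not have.\<close>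

lemma bfold_oriented_coloring_exists:
  assumes og: "oriented_graph V A"
  shows "\<exists>k f. bfold_oriented_coloring V A b k f"
proof -
  have fin: "finite V" and AV: "A \<subseteq> V \<times> V" using og by (simp_all add: oriented_graph_def)
  obtain i where i: "bij_betw i V {0..<card V}" using ex_bij_betw_finite_nat[OF fin] by blast
  define f where "f v = {b * i v..<b * i v + b}" for v
  have dis: "f x \<inter> f y = {}" if "x \<in> V" "y \<in> V" "x \<noteq> y" for x y
    unfolding f_def using blocks_disjoint bij_betw_imp_inj_on[OF i] that
    by (metis inj_on_eq_iff)
  have "bfold_oriented_coloring V A b (b * card V) f"
    unfolding bfold_oriented_coloring_def
  proof (intro conjI ballI allI impI)
    fix x assume "x \<in> V"
    then have "Suc (i x) \<le> card V" using bij_betwE[OF i] by (simp add: Suc_le_eq)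
    then have "b * i x + b \<le> b * card V" using mult_le_mono2[of "Suc (i x)" "card V" b] by simp
    then show "f x \<subseteq> {0..<b * card V}" unfolding f_def by auto
    show "card (f x) = b" unfolding f_def by simp
  next
    fix x y assume "(x, y) \<in> A"
    then show "f x \<inter> f y = {}" using AV og dis unfolding oriented_graph_def by blast
  next
    fix x y z w assume xy: "(x, y) \<in> A" and zw: "(z, w) \<in> A" and "f x \<inter> f w \<noteq> {}"
    then have "x = w" using dis AV by blast
    then have "y \<noteq> z" using xy zw og unfolding oriented_graph_def by blast
    then show "f y \<inter> f z = {}" using dis xy zw AV by blast
  qed
  then show ?thesis by blast
qed

lemma chi_o_b_attained:
  assumes "oriented_graph V A"
  shows "\<exists>f. bfold_oriented_coloring V A b (chi_o_b b V A) f"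
  unfolding chi_o_b_def by (rule LeastI_ex) (rule bfold_oriented_coloring_exists[OF assms])

theorem theorem4:
  fixes V :: "'a set" and A :: "('a \<times> 'a) set"
  assumes "oriented_graph V A"
  shows "chi_o_frac V A \<ge> real (card V) / real (alpha_o V A)"
  unfolding chi_o_frac_def
proof (rule cINF_greatest)
  fix b :: nat assume "b \<in> {1..}"
  then have b: "b > 0" by simp
  have fin: "finite V" and AV: "A \<subseteq> V \<times> V" using assms by (simp_all add: oriented_graph_def)
  obtain f where "bfold_oriented_coloring V A b (chi_o_b b V A) f"
    using chi_o_b_attained[OF assms] by blast
  then have "real b * real (card V) \<le> real (chi_o_b b V A) * real (alpha_o V A)"
    using card_mult_le_colours_mult_alpha_o[OF fin AV _ b] by (metis of_nat_le_iff of_nat_mult)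
  then show "real (card V) / real (alpha_o V A) \<le> real (chi_o_b b V A) / real b"
    using b by (cases "alpha_o V A = 0") (simp_all add: field_simps)
qed simp

end
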